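(* Let $G$ and $H$ be graphs with $i_G$ and $i_H$ isolated vertices, respectively. Then $$\rho(G\times H)\geq\max\{\rho_o(G^-)\rho(H^-),\ \rho_o(H^-)\rho(G^-)\}+i_G|V(H)|+i_H|V(G)|-i_Gi_H.$$
   Context: All graphs are finite and simple. $G^-$ denotes the graph obtained from $G$ by deleting all isolated vertices. A packing of $G$ is a set $P\subseteq V(G)$ with $N[u]\cap N[v]=\emptyset$ for all distinct $u,v\in P$ ($N[\cdot]$ the closed neighborhood); $\rho(G)$ is the maximum size of a packing. An open packing is a set whose vertices have pairwise disjoint open neighborhoods; $\rho_o(G)$ is its maximum size. The direct product $G\times H$ has vertex set $V(G)\times V(H)$, with $(g,h)$ adjacent to $(g',h')$ iff $gg'\in E(G)$ and $hh'\in E(H)$. *)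

theory Defs
  imports Main
begin

record 'a sgraph =
  verts :: "'a set"
  adj :: "'a \<Rightarrow> 'a \<Rightarrow> bool"

definition graph :: "('a, 'b) sgraph_scheme \<Rightarrow> bool" where
  "graph G \<longleftrightarrow> finite (verts G)
     \<and> (\<forall>u v. adj G u v \<longrightarrow> u \<in> verts G \<and> v \<in> verts G)
     \<and> (\<forall>u v. adj G u v \<longrightarrow> adj G v u)
     \<and> (\<forall>v. \<not> adj G v v)"

definition open_nbhd :: "'a sgraph \<Rightarrow> 'a \<Rightarrow> 'a set" where
  "open_nbhd G v = {u \<in> verts G. adj G v u}"

definition closed_nbhd :: "'a sgraph \<Rightarrow> 'a \<Rightarrow> 'a set" where
  "closed_nbhd G v = insert v (open_nbhd G v)"

definition packing :: "'a sgraph \<Rightarrow> 'a set \<Rightarrow> bool" where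
  "packing G P \<longleftrightarrow> P \<subseteq> verts G \<and>
     (\<forall>u\<in>P. \<forall>v\<in>P. u \<noteq> v \<longrightarrow> closed_nbhd G u \<inter> closed_nbhd G v = {})"

definition open_packing :: "'a sgraph \<Rightarrow> 'a set \<Rightarrow> bool" where
  "open_packing G P \<longleftrightarrow> P \<subseteq> verts G \<and>
     (\<forall>u\<in>P. \<forall>v\<in>P. u \<noteq> v \<longrightarrow> open_nbhd G u \<inter> open_nbhd G v = {})"

definition packing_number :: "'a sgraph \<Rightarrow> nat" where
  "packing_number G = Max (card ` {P. packing G P})"

definition open_packing_number :: "'a sgraph \<Rightarrow> nat" where
  "open_packing_number G = Max (card ` {P. open_packing G P})"

definition isolated_vertices :: "'a sgraph \<Rightarrow> 'a set" where
  "isolated_vertices G = {v \<in> verts G. open_nbhd G v = {}}"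

definition del_isolated :: "'a sgraph \<Rightarrow> 'a sgraph" where
  "del_isolated G = \<lparr>verts = verts G - isolated_vertices G,
     adj = (\<lambda>u v. adj G u v \<and> u \<notin> isolated_vertices G \<and> v \<notin> isolated_vertices G)\<rparr>"

definition direct_prod :: "'a sgraph \<Rightarrow> 'b sgraph \<Rightarrow> ('a \<times> 'b) sgraph" where
  "direct_prod G H = \<lparr>verts = verts G \<times> verts H,
     adj = (\<lambda>(g, h) (g', h'). adj G g g' \<and> adj H h h')\<rparr>"

end

theory Submission
  imports Defs
begin

text \<open>Every vertex of G \<times> H with an isolated coordinate is isolated, so these
  vertices can be added to any packing of G \<times> H avoiding them. Such a packing is
  Q \<times> P for an open packing Q of G^- and a packing P of H^-:
  two distinct vertices (a, b), (c, d) of Q \<times> P cannot share a neighbour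
  (x, y), since a \<noteq> c would give a common neighbour x of a and c in G, and
  a = c would give a common neighbour y of b \<noteq> d in H. Swapping the factors
  gives the second product, and inclusion-exclusion counts the isolated vertices.\<close>

lemma graph_adj_verts:
  "graph G \<Longrightarrow> adj G u v \<Longrightarrow> u \<in> verts G \<and> v \<in> verts G"
  unfolding graph_def by blast

lemma graph_adj_sym: "graph G \<Longrightarrow> adj G u v \<Longrightarrow> adj G v u"
  unfolding graph_def by blast

lemma graph_adj_irrefl: "graph G \<Longrightarrow> \<not> adj G v v"
  unfolding graph_def by blast

lemma finite_Collect_subsets_of:
  "finite V \<Longrightarrow> (\<And>P. X P \<Longrightarrow> P \<subseteq> V) \<Longrightarrow> finite (Collect X)"
  by (metis Collect_mono PowI Pow_def finite_Pow_iff rev_finite_subset)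

lemma card_le_Max_card:
  assumes "finite V" "\<And>P. X P \<Longrightarrow> P \<subseteq> V" "X P"
  shows "card P \<le> Max (card ` Collect X)"
  using assms finite_Collect_subsets_of[OF assms(1,2)] by (intro Max_ge) auto

lemma Max_card_attained:
  assumes "finite V" "\<And>P. X P \<Longrightarrow> P \<subseteq> V" "X {}"
  shows "\<exists>P. X P \<and> card P = Max (card ` Collect X)"
proof -
  have "Max (card ` Collect X) \<in> card ` Collect X"
    using assms finite_Collect_subsets_of[OF assms(1,2)] by (intro Max_in) auto
  then show ?thesis by auto
qed

lemma card_le_packing_number:
  "finite (verts G) \<Longrightarrow> packing G P \<Longrightarrow> card P \<le> packing_number G"
  unfolding packing_number_def by (rule card_le_Max_card) (auto simp: packing_def)

lemma ex_packing_card_eq_packing_number: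
  "finite (verts G) \<Longrightarrow> \<exists>P. packing G P \<and> card P = packing_number G"
  unfolding packing_number_def by (rule Max_card_attained) (auto simp: packing_def)

lemma ex_open_packing_card_eq_open_packing_number:
  "finite (verts G) \<Longrightarrow> \<exists>P. open_packing G P \<and> card P = open_packing_number G"
  unfolding open_packing_number_def by (rule Max_card_attained) (auto simp: open_packing_def)

lemma verts_del_isolated: "verts (del_isolated G) = verts G - isolated_vertices G"
  by (simp add: del_isolated_def)

lemma adj_not_isolated:
  assumes "graph G" "adj G u v"
  shows "u \<notin> isolated_vertices G" "v \<notin> isolated_vertices G"
proof -
  have "v \<in> open_nbhd G u" "u \<in> open_nbhd G v"
    using assms graph_adj_sym[OF assms(1)] graph_adj_verts[OF assms(1)]
    by (auto simp: open_nbhd_def)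
  then show "u \<notin> isolated_vertices G" "v \<notin> isolated_vertices G"
    by (auto simp: isolated_vertices_def)
qed

lemma open_nbhd_del_isolated:
  "graph G \<Longrightarrow> open_nbhd (del_isolated G) v = open_nbhd G v"
  by (auto simp: open_nbhd_def del_isolated_def dest: adj_not_isolated)

lemma closed_nbhd_del_isolated:
  "graph G \<Longrightarrow> closed_nbhd (del_isolated G) v = closed_nbhd G v"
  by (simp add: closed_nbhd_def open_nbhd_del_isolated)

lemma open_packing_del_isolated:
  "graph G \<Longrightarrow> open_packing (del_isolated G) Q \<longleftrightarrow>
     open_packing G Q \<and> Q \<inter> isolated_vertices G = {}"
  unfolding open_packing_def by (auto simp: open_nbhd_del_isolated verts_del_isolated)

lemma packing_del_isolated:
  "graph G \<Longrightarrow> packing (del_isolated G) P \<longleftrightarrow> packing G P \<and> P \<inter> isolated_vertices G = {}"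
  unfolding packing_def by (auto simp: closed_nbhd_del_isolated verts_del_isolated)

lemma verts_direct_prod: "verts (direct_prod G H) = verts G \<times> verts H"
  by (simp add: direct_prod_def)

lemma open_nbhd_direct_prod:
  "open_nbhd (direct_prod G H) (g, h) = open_nbhd G g \<times> open_nbhd H h"
  unfolding open_nbhd_def direct_prod_def by auto

lemma closed_nbhd_direct_prod:
  "closed_nbhd (direct_prod G H) (g, h) = insert (g, h) (open_nbhd G g \<times> open_nbhd H h)"
  by (simp add: closed_nbhd_def open_nbhd_direct_prod)

lemma graph_direct_prod: "graph G \<Longrightarrow> graph H \<Longrightarrow> graph (direct_prod G H)"
  unfolding graph_def direct_prod_def by auto

lemma isolated_vertices_direct_prod:
  "isolated_vertices G \<times> verts H \<union> verts G \<times> isolated_vertices H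
     \<subseteq> isolated_vertices (direct_prod G H)"
  unfolding isolated_vertices_def by (auto simp: open_nbhd_direct_prod verts_direct_prod)

lemma packing_Un_isolated:
  assumes G: "graph G" and P: "packing G P" and I: "I \<subseteq> isolated_vertices G"
  shows "packing G (P \<union> I)"
  unfolding packing_def
proof (intro conjI ballI impI)
  show "P \<union> I \<subseteq> verts G"
    using P I by (auto simp: packing_def isolated_vertices_def)
next
  have singleton: "closed_nbhd G v = {v}" if "v \<in> I" for v
    using that I by (auto simp: closed_nbhd_def isolated_vertices_def)
  have not_in: "v \<notin> closed_nbhd G u" if "v \<in> I" "u \<noteq> v" for u v
    using that I adj_not_isolated[OF G, of u v] by (auto simp: closed_nbhd_def open_nbhd_def)
  fix u v assume "u \<in> P \<union> I" "v \<in> P \<union> I" "u \<noteq> v"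
  then show "closed_nbhd G u \<inter> closed_nbhd G v = {}"
    using P singleton not_in[of u v] not_in[of v u] unfolding packing_def by auto blast
qed

lemma packing_direct_prod_Times:
  assumes Q: "open_packing G Q" and H: "graph H" and P: "packing H P"
  shows "packing (direct_prod G H) (Q \<times> P)"
  unfolding packing_def
proof (intro conjI ballI impI)
  show "Q \<times> P \<subseteq> verts (direct_prod G H)"
    using Q P by (auto simp: open_packing_def packing_def direct_prod_def)
next
  fix u v assume "u \<in> Q \<times> P" "v \<in> Q \<times> P" "u \<noteq> v"
  then obtain a b c d where u: "u = (a, b)" "a \<in> Q" "b \<in> P"
    and v: "v = (c, d)" "c \<in> Q" "d \<in> P" and ne: "(a, b) \<noteq> (c, d)" by auto
  have P_closed: "closed_nbhd H b \<inter> closed_nbhd H d = {}" if "b \<noteq> d"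
    using P that \<open>b \<in> P\<close> \<open>d \<in> P\<close> unfolding packing_def by blast
  have P_open: "open_nbhd H b \<inter> open_nbhd H d = {}" if "b \<noteq> d"
    using P_closed[OF that] by (auto simp: closed_nbhd_def)
  have Q_open: "open_nbhd G a \<inter> open_nbhd G c = {}" if "a \<noteq> c"
    using Q that \<open>a \<in> Q\<close> \<open>c \<in> Q\<close> unfolding open_packing_def by blast
  have not_adj: "(a, b) \<notin> open_nbhd G c \<times> open_nbhd H d" "(c, d) \<notin> open_nbhd G a \<times> open_nbhd H b"
    using P_closed graph_adj_irrefl[OF H] by (auto simp: closed_nbhd_def open_nbhd_def)
  have "open_nbhd G a \<times> open_nbhd H b \<inter> open_nbhd G c \<times> open_nbhd H d = {}"
    using P_open Q_open ne by auto
  with not_adj ne show "closed_nbhd (direct_prod G H) u \<inter> closed_nbhd (direct_prod G H) v = {}"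
    unfolding u v closed_nbhd_direct_prod by blast
qed

lemma packing_direct_prod_swap:
  assumes S: "packing (direct_prod G H) S"
  shows "packing (direct_prod H G) (prod.swap ` S)"
  unfolding packing_def
proof (intro conjI ballI impI)
  show "prod.swap ` S \<subseteq> verts (direct_prod H G)"
    using S by (auto simp: packing_def verts_direct_prod)
next
  have nbhd: "closed_nbhd (direct_prod H G) (prod.swap p) = prod.swap ` closed_nbhd (direct_prod G H) p"
    for p
    by (cases p) (auto simp: closed_nbhd_direct_prod)
  fix u v assume "u \<in> prod.swap ` S" "v \<in> prod.swap ` S" "u \<noteq> v"
  then obtain p q where "u = prod.swap p" "v = prod.swap q" "p \<in> S" "q \<in> S" "p \<noteq> q"
    by auto
  moreover have "closed_nbhd (direct_prod G H) p \<inter> closed_nbhd (direct_prod G H) q = {}"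
    using S calculation unfolding packing_def by blast
  ultimately show "closed_nbhd (direct_prod H G) u \<inter> closed_nbhd (direct_prod H G) v = {}"
    by (auto simp: nbhd)
qed

lemma packing_number_direct_prod_swap_le:
  assumes "finite (verts G)" "finite (verts H)"
  shows "packing_number (direct_prod G H) \<le> packing_number (direct_prod H G)"
proof -
  obtain S where S: "packing (direct_prod G H) S" "card S = packing_number (direct_prod G H)"
    using ex_packing_card_eq_packing_number[of "direct_prod G H"] assms
    by (auto simp: verts_direct_prod)
  have "card (prod.swap ` S) \<le> packing_number (direct_prod H G)"
    using assms by (intro card_le_packing_number packing_direct_prod_swap S(1))
      (simp add: verts_direct_prod)
  then show ?thesis by (simp add: card_image S(2))
qed

lemma card_Times_Un_Times:
  assumes "finite X" "finite Y" "A \<subseteq> X" "B \<subseteq> Y"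
  shows "card (A \<times> Y \<union> X \<times> B) + card A * card B = card A * card Y + card B * card X"
proof -
  have "A \<times> Y \<inter> X \<times> B = A \<times> B" using assms(3,4) by auto
  moreover have "finite A" "finite B" using assms finite_subset by auto
  ultimately show ?thesis
    using card_Un_Int[of "A \<times> Y" "X \<times> B"] assms(1,2)
    by (simp add: card_cartesian_product mult.commute)
qed

lemma packing_number_direct_prod_ge:
  assumes G: "graph G" and H: "graph H" and S: "packing (direct_prod G H) (A \<times> B)"
    and A: "A \<inter> isolated_vertices G = {}" and B: "B \<inter> isolated_vertices H = {}"
  shows "card A * card B + card (isolated_vertices G \<times> verts H \<union> verts G \<times> isolated_vertices H)
    \<le> packing_number (direct_prod G H)"
proof -
  let ?I = "isolated_vertices G \<times> verts H \<union> verts G \<times> isolated_vertices H"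
  have fin: "finite (verts (direct_prod G H))"
    using G H by (simp add: graph_def verts_direct_prod)
  have sub: "A \<times> B \<subseteq> verts G \<times> verts H"
    using S by (simp add: packing_def verts_direct_prod)
  have "finite (A \<times> B)" "finite ?I"
    using fin sub by (auto simp: verts_direct_prod isolated_vertices_def intro: finite_subset)
  moreover have "A \<times> B \<inter> ?I = {}" using A B by auto
  ultimately have "card (A \<times> B \<union> ?I) = card A * card B + card ?I"
    by (simp add: card_Un_disjoint card_cartesian_product)
  moreover have "packing (direct_prod G H) (A \<times> B \<union> ?I)"
    using packing_Un_isolated[OF graph_direct_prod[OF G H] S isolated_vertices_direct_prod] .
  then have "card (A \<times> B \<union> ?I) \<le> packing_number (direct_prod G H)"
    by (rule card_le_packing_number[OF fin])
  ultimately show ?thesis by simp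
qed

lemma packing_number_direct_prod_lower_bound:
  assumes G: "graph G" and H: "graph H"
  shows "open_packing_number (del_isolated G) * packing_number (del_isolated H)
      + card (isolated_vertices G) * card (verts H) + card (isolated_vertices H) * card (verts G)
    \<le> packing_number (direct_prod G H) + card (isolated_vertices G) * card (isolated_vertices H)"
proof -
  have fin: "finite (verts G)" "finite (verts H)"
    using G H by (simp_all add: graph_def)
  obtain Q where Q: "open_packing (del_isolated G) Q" "card Q = open_packing_number (del_isolated G)"
    using ex_open_packing_card_eq_open_packing_number[of "del_isolated G"] fin(1)
    by (auto simp: verts_del_isolated)
  obtain P where P: "packing (del_isolated H) P" "card P = packing_number (del_isolated H)"
    using ex_packing_card_eq_packing_number[of "del_isolated H"] fin(2)
    by (auto simp: verts_del_isolated)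
  have Q': "open_packing G Q" "Q \<inter> isolated_vertices G = {}"
    using Q(1) G by (simp_all add: open_packing_del_isolated)
  have P': "packing H P" "P \<inter> isolated_vertices H = {}"
    using P(1) H by (simp_all add: packing_del_isolated)
  have "card Q * card P + card (isolated_vertices G \<times> verts H \<union> verts G \<times> isolated_vertices H)
      \<le> packing_number (direct_prod G H)"
    using packing_direct_prod_Times[OF Q'(1) H P'(1)]
    by (rule packing_number_direct_prod_ge[OF G H _ Q'(2) P'(2)])
  moreover have "card (isolated_vertices G \<times> verts H \<union> verts G \<times> isolated_vertices H)
      + card (isolated_vertices G) * card (isolated_vertices H)
    = card (isolated_vertices G) * card (verts H) + card (isolated_vertices H) * card (verts G)"
    using fin by (intro card_Times_Un_Times) (auto simp: isolated_vertices_def)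
  ultimately show ?thesis unfolding Q(2)[symmetric] P(2)[symmetric] by linarith
qed

theorem mainTheorem12:
  fixes G :: "'a sgraph" and H :: "'b sgraph"
  assumes "graph G" and "graph H"
  shows "int (packing_number (direct_prod G H)) \<ge>
    int (max (open_packing_number (del_isolated G) * packing_number (del_isolated H))
             (open_packing_number (del_isolated H) * packing_number (del_isolated G)))
    + int (card (isolated_vertices G)) * int (card (verts H))
    + int (card (isolated_vertices H)) * int (card (verts G))
    - int (card (isolated_vertices G)) * int (card (isolated_vertices H))"
proof -
  have "packing_number (direct_prod H G) = packing_number (direct_prod G H)"
    using assms by (intro antisym packing_number_direct_prod_swap_le) (simp_all add: graph_def)
  then have "max (open_packing_number (del_isolated G) * packing_number (del_isolated H))
      (open_packing_number (del_isolated H) * packing_number (del_isolated G))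
      + card (isolated_vertices G) * card (verts H) + card (isolated_vertices H) * card (verts G)
    \<le> packing_number (direct_prod G H) + card (isolated_vertices G) * card (isolated_vertices H)"
    using packing_number_direct_prod_lower_bound[OF assms]
      packing_number_direct_prod_lower_bound[OF assms(2,1)]
    by (simp add: ac_simps)
  then show ?thesis
    by (simp only: diff_le_eq of_nat_mult[symmetric] of_nat_add[symmetric] of_nat_le_iff)
qed

end
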